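(* Let $F$, $H$, $X$, $\Omega$, $Q$ and the sequences generated by the IneIREG method be as described in the context. Suppose: $(\eta_k)$ is nonincreasing; $\alpha_0\in[0,1]$ and $(\alpha_k/\eta_k)$ is nonincreasing; $\lambda_k\in[\underline\lambda,\overline\lambda]$ for all $k\ge0$ with $0<\underline\lambda\le\overline\lambda\le1/(L_F+\eta_0L_H)$; and $\sum_{k=0}^\infty\delta_k\eta_k^{-1}<+\infty$. For $k\ge1$ let $\Lambda_k=\sum_{j=0}^{k-1}\lambda_j$ and $\overline y_k=\Lambda_k^{-1}\sum_{j=0}^{k-1}\lambda_jy_j$. Then for all $k\ge1$, $$-B_H\,\mathrm{dist}(\overline y_k,Q)\le\mathrm{Gap}(\overline y_k,H,Q)\le\frac{1}{k\eta_k}\Big(\frac{D_X^2}{2\underline\lambda}\Big)+\frac{\sum_{j=0}^{k-1}\delta_j\eta_j^{-1}}{k}\Big(\frac{1}{2\underline\lambda}\Big).$$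
   Context: Work in $\mathbb{R}^n$ with Euclidean inner product $\langle\cdot,\cdot\rangle$ and norm $\|\cdot\|$. The maps $F\colon \mathrm{Dom}\,F\to\mathbb{R}^n$ and $H\colon\mathrm{Dom}\,H\to\mathbb{R}^n$ are monotone and Lipschitz continuous with constants $L_F>0$ and $L_H>0$. $X$ is a nonempty compact convex set and $\Omega$ a nonempty closed convex set with $X\subset\Omega\subset\mathrm{Dom}\,F\cap\mathrm{Dom}\,H$; $P_X,P_\Omega$ denote orthogonal projections. $Q:=\{x\in X:\langle F(x),y-x\rangle\ge0\ \forall y\in X\}$ is assumed nonempty. $D_X:=\sup_{x,y\in X}\|x-y\|$, $B_H:=\sup_{x\in Q}\|H(x)\|$, $\mathrm{dist}(y,Q)$ is the Euclidean distance to $Q$. $\mathrm{Gap}(z,H,Q):=\sup_{x\in Q}\langle H(x),z-x\rangle$. IneIREG method: start with $x_0=x_{-1}\in X$; for $k=0,1,\dots$, with parameters $\alpha_k\ge0$, $\lambda_k>0$, $\eta_k>0$, set $w_k=x_k+\alpha_k(x_k-x_{k-1})$, $w'_k=P_\Omega(w_k)$, $y_k=P_X\big(w_k-\lambda_k(F(w'_k)+\eta_kH(w'_k))\big)$, $x_{k+1}=P_X\big(w_k-\lambda_k(F(y_k)+\eta_kH(y_k))\big)$. Also $\delta_k:=\alpha_k(1+\alpha_k)\|x_k-x_{k-1}\|^2$ for $k\ge0$. *)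

theory Defs
  imports "HOL-Analysis.Analysis"
begin

definition monotone_op :: "'a::real_inner set \<Rightarrow> ('a \<Rightarrow> 'a) \<Rightarrow> bool" where
  "monotone_op D F \<longleftrightarrow> (\<forall>x\<in>D. \<forall>y\<in>D. 0 \<le> (F x - F y) \<bullet> (x - y))"

abbreviation proj :: "'a::euclidean_space set \<Rightarrow> 'a \<Rightarrow> 'a" where
  "proj S x \<equiv> closest_point S x"

definition VI_sol :: "('a::real_inner \<Rightarrow> 'a) \<Rightarrow> 'a set \<Rightarrow> 'a set" where
  "VI_sol F X = {x \<in> X. \<forall>y\<in>X. 0 \<le> F x \<bullet> (y - x)}"

definition Gap :: "'a::real_inner \<Rightarrow> ('a \<Rightarrow> 'a) \<Rightarrow> 'a set \<Rightarrow> real" where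
  "Gap z H Q = (SUP x\<in>Q. H x \<bullet> (z - x))"

definition bound_on :: "('a::real_normed_vector \<Rightarrow> 'a) \<Rightarrow> 'a set \<Rightarrow> real" where
  "bound_on H Q = (SUP x\<in>Q. norm (H x))"

end

theory Submission
  imports Defs
begin

(*
  For q \<in> Q, one extragradient step with the (L_F + \<eta>_k L_H)-Lipschitz operator F + \<eta>_k H and
  step \<lambda>_k \<le> 1 / (L_F + \<eta>_k L_H) gives
  \<parallel>x_{k+1} - q\<parallel>^2 \<le> \<parallel>w_k - q\<parallel>^2 + 2 \<lambda>_k \<langle>F y_k + \<eta>_k H y_k, q - y_k\<rangle>,
  and monotonicity of F and H together with q \<in> Q bound the inner product by
  -\<eta>_k \<langle>H q, y_k - q\<rangle>. Dividing by \<eta>_k, expanding \<parallel>w_k - q\<parallel>^2 along the inertial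
  extrapolation and telescoping with the nondecreasing weights 1/\<eta>_k and the nonincreasing weights
  \<alpha>_k/\<eta>_k (all distances to q being at most D_X) yields
  2 \<Sum>_{j<k} \<lambda>_j \<langle>H q, y_j - q\<rangle> \<le> D_X^2/\<eta>_k + \<Sum>_{j<k} \<delta>_j/\<eta>_j.
  Averaging with the weights \<lambda>_j bounds \<langle>H q, ybar_k - q\<rangle> uniformly in q \<in> Q, which is the
  upper Gap bound; the lower bound is Cauchy-Schwarz.
*)

lemma extragradient_step_inequality:
  fixes G :: "'a::euclidean_space \<Rightarrow> 'a"
  assumes X: "closed X" "convex X" "X \<noteq> {}"
    and \<Omega>: "closed \<Omega>" "convex \<Omega>" "X \<subseteq> \<Omega>"
    and lipG: "L-lipschitz_on \<Omega> G" and lam: "0 \<le> lam" "lam * L \<le> 1"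
    and y: "y = closest_point X (w - lam *\<^sub>R G (closest_point \<Omega> w))"
    and z: "z \<in> X"
  shows "(norm (closest_point X (w - lam *\<^sub>R G y) - z))\<^sup>2
           \<le> (norm (w - z))\<^sup>2 + 2 * lam * (G y \<bullet> (z - y))"
proof -
  define w' where "w' = closest_point \<Omega> w"
  define x' where "x' = closest_point X (w - lam *\<^sub>R G y)"
  have "\<Omega> \<noteq> {}" using X(3) \<Omega>(3) by blast
  then have w'\<Omega>: "w' \<in> \<Omega>" unfolding w'_def using \<Omega>(1) by (simp add: closest_point_in_set)
  have yX: "y \<in> X" and x'X: "x' \<in> X"
    unfolding y x'_def using X(1,3) by (auto intro: closest_point_in_set)
  have proj_x': "(w - lam *\<^sub>R G y - x') \<bullet> (z - x') \<le> 0"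
    unfolding x'_def using X(2,1) z by (rule closest_point_dot)
  have proj_y: "(w - lam *\<^sub>R G w' - y) \<bullet> (x' - y) \<le> 0"
    unfolding y w'_def using X(2,1) x'X by (rule closest_point_dot)
  have "norm (w' - y) \<le> norm (w - y)"
    using closest_point_lipschitz[OF \<Omega>(2,1) \<open>\<Omega> \<noteq> {}\<close>, of w y] closest_point_self[of y \<Omega>] yX \<Omega>(3)
    unfolding w'_def by (auto simp: dist_norm)
  then have "norm (G w' - G y) \<le> L * norm (w - y)"
    using lipschitz_on_normD[OF lipG w'\<Omega>] yX \<Omega>(3) lipschitz_on_nonneg[OF lipG]
    by (meson order_trans mult_left_mono subsetD)
  then have "lam * ((G w' - G y) \<bullet> (x' - y)) \<le> lam * (L * norm (w - y) * norm (x' - y))"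
    using norm_cauchy_schwarz[of "G w' - G y" "x' - y"] lam(1)
    by (meson mult_left_mono mult_right_mono norm_ge_zero order_trans)
  also have "\<dots> \<le> norm (w - y) * norm (x' - y)"
    using mult_right_mono[OF lam(2), of "norm (w - y) * norm (x' - y)"] by (simp add: mult.assoc)
  also have "\<dots> \<le> ((norm (w - y))\<^sup>2 + (norm (x' - y))\<^sup>2) / 2"
    using sum_squares_bound[of "norm (w - y)" "norm (x' - y)"] by (simp add: power2_eq_square)
  finally have lip_term: "2 * lam * ((G w' - G y) \<bullet> (x' - y)) \<le> (norm (w - y))\<^sup>2 + (norm (x' - y))\<^sup>2"
    by simp
  show ?thesis
    using proj_x' proj_y lip_term unfolding x'_def[symmetric]
    by (simp add: power2_norm_eq_inner inner_commute algebra_simps)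
qed

lemma power2_norm_extrapolation:
  fixes p q :: "'a::real_inner"
  shows "(norm ((1 + a) *\<^sub>R p - a *\<^sub>R q))\<^sup>2
           = (1 + a) * (norm p)\<^sup>2 - a * (norm q)\<^sup>2 + a * (1 + a) * (norm (p - q))\<^sup>2"
  by (simp add: power2_norm_eq_inner inner_diff_left inner_diff_right inner_commute algebra_simps)

lemma VI_sol_monotone_inner_le:
  assumes monoF: "monotone_op D F" and monoH: "monotone_op D H" and "X \<subseteq> D"
    and q: "q \<in> VI_sol F X" and y: "y \<in> X" and "0 \<le> \<eta>"
  shows "(F y + \<eta> *\<^sub>R H y) \<bullet> (q - y) \<le> - \<eta> * (H q \<bullet> (y - q))"
proof -
  have qD: "q \<in> D" and yD: "y \<in> D" using q y \<open>X \<subseteq> D\<close> unfolding VI_sol_def by auto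
  have "F y \<bullet> (q - y) \<le> - (F q \<bullet> (y - q))"
    using monoF qD yD unfolding monotone_op_def by (force simp: inner_diff_left inner_diff_right)
  also have "\<dots> \<le> 0" using q y unfolding VI_sol_def by auto
  finally have F_part: "F y \<bullet> (q - y) \<le> 0" .
  have "H y \<bullet> (q - y) \<le> - (H q \<bullet> (y - q))"
    using monoH qD yD unfolding monotone_op_def by (force simp: inner_diff_left inner_diff_right)
  then have "\<eta> * (H y \<bullet> (q - y)) \<le> - \<eta> * (H q \<bullet> (y - q))"
    using mult_left_mono \<open>0 \<le> \<eta>\<close> by fastforce
  with F_part show ?thesis by (simp add: inner_add_left)
qed

lemma weighted_telescoping_sum_le:
  fixes a b c d s :: "nat \<Rightarrow> real"
  assumes a: "\<And>j. 0 \<le> a j \<and> a j \<le> M"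
    and b: "incseq b" "\<And>j. 0 \<le> b j" and c: "decseq c" "\<And>j. 0 \<le> c j" and "c 0 \<le> b 0"
    and s: "\<And>j. s j \<le> (b j + c j) * a j - c j * a (j - 1) - b j * a (Suc j) + d j"
  shows "(\<Sum>j<k. s j) \<le> b k * M + (\<Sum>j<k. d j)"
proof -
  \<comment> \<open>The term (b j - c j) * M absorbs the drift of the weights b and c.\<close>
  define P where "P j = b j * a j - c j * a (j - 1) - (b j - c j) * M" for j
  have P_Suc: "P (Suc j) \<le> b j * a (Suc j) - c j * a j - (b j - c j) * M" for j
  proof -
    have "(b (Suc j) - b j) * (a (Suc j) - M) \<le> 0"
      using b(1) a[of "Suc j"] by (simp add: incseq_Suc_iff mult_nonneg_nonpos)
    moreover have "(c j - c (Suc j)) * (a j - M) \<le> 0"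
      using c(1) a[of j] by (simp add: decseq_Suc_iff mult_nonneg_nonpos)
    ultimately show ?thesis unfolding P_def by (simp add: algebra_simps)
  qed
  have "s j \<le> P j - P (Suc j) + d j" for j
    using P_Suc[of j] s[of j] unfolding P_def by (simp add: algebra_simps)
  then have "(\<Sum>j<k. s j) \<le> (\<Sum>j<k. P j - P (Suc j)) + (\<Sum>j<k. d j)"
    by (simp add: sum.distrib[symmetric] sum_mono)
  also have "(\<Sum>j<k. P j - P (Suc j)) = P 0 - P k"
    by (rule sum_lessThan_telescope')
  finally have "(\<Sum>j<k. s j) \<le> P 0 - P k + (\<Sum>j<k. d j)" .
  moreover have "P 0 \<le> 0"
    using mult_nonneg_nonpos[of "b 0 - c 0" "a 0 - M"] a[of 0] \<open>c 0 \<le> b 0\<close>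
    by (simp add: P_def algebra_simps)
  moreover have "- P k \<le> b k * M"
  proof -
    have "c k * a (k - 1) \<le> c k * M" using a c(2) by (simp add: mult_left_mono)
    moreover have "0 \<le> b k * a k" using a b(2) by simp
    ultimately show ?thesis unfolding P_def by (simp add: algebra_simps)
  qed
  ultimately show ?thesis by linarith
qed

lemma inner_weighted_mean_diff:
  fixes y :: "nat \<Rightarrow> 'a::real_inner"
  assumes "sum lam A \<noteq> 0"
  shows "v \<bullet> ((1 / sum lam A) *\<^sub>R (\<Sum>j\<in>A. lam j *\<^sub>R y j) - q)
           = (\<Sum>j\<in>A. lam j * (v \<bullet> (y j - q))) / sum lam A"
  using assms
  by (simp add: inner_diff_right inner_sum_right sum_subtractf sum_distrib_right[symmetric]
      right_diff_distrib field_simps)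

lemma Gap_leI:
  assumes "Q \<noteq> {}" and "\<And>q. q \<in> Q \<Longrightarrow> H q \<bullet> (z - q) \<le> R"
  shows "Gap z H Q \<le> R"
  unfolding Gap_def using assms by (intro cSUP_least) auto

lemma Gap_ge_neg_bound_on_infdist:
  fixes H :: "'a::real_inner \<Rightarrow> 'a"
  assumes Q: "Q \<noteq> {}" "bounded Q" and HQ: "bounded (H ` Q)"
  shows "- bound_on H Q * infdist z Q \<le> Gap z H Q"
proof -
  obtain M where "0 < M" and M: "\<And>q. q \<in> Q \<Longrightarrow> norm (H q) \<le> M"
    using HQ unfolding bounded_pos by auto
  obtain K where K: "\<And>q. q \<in> Q \<Longrightarrow> norm q \<le> K"
    using Q(2) unfolding bounded_iff by auto
  obtain q0 where q0: "q0 \<in> Q" using Q(1) by blast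
  define B where "B = bound_on H Q"
  have HB: "norm (H q) \<le> B" if "q \<in> Q" for q
    unfolding B_def bound_on_def using M that by (intro cSUP_upper bdd_aboveI2) auto
  have "H q \<bullet> (z - q) \<le> M * (norm z + K)" if "q \<in> Q" for q
  proof -
    have "H q \<bullet> (z - q) \<le> norm (H q) * norm (z - q)" by (rule norm_cauchy_schwarz)
    also have "\<dots> \<le> M * (norm z + K)"
      using M[OF that] K[OF that] norm_triangle_ineq4[of z q] \<open>0 < M\<close>
      by (intro mult_mono) simp_all
    finally show ?thesis .
  qed
  then have bdd: "bdd_above ((\<lambda>q. H q \<bullet> (z - q)) ` Q)" by (rule bdd_aboveI2)
  have dist_le: "- Gap z H Q \<le> dist z q * B" if "q \<in> Q" for q
  proof -
    have "- (H q \<bullet> (z - q)) \<le> dist z q * norm (H q)"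
      using norm_cauchy_schwarz[of "- H q" "z - q"] by (simp add: dist_norm mult.commute)
    also have "\<dots> \<le> dist z q * B" using HB[OF that] by (simp add: mult_left_mono)
    moreover have "H q \<bullet> (z - q) \<le> Gap z H Q"
      unfolding Gap_def using that bdd by (rule cSUP_upper)
    ultimately show ?thesis by linarith
  qed
  have "- B * infdist z Q \<le> Gap z H Q"
  proof (cases "B = 0")
    case True
    then show ?thesis using dist_le[OF q0] by simp
  next
    case False
    then have "0 < B" using HB[OF q0] norm_ge_zero[of "H q0"] by linarith
    then have "- Gap z H Q / B \<le> dist z q" if "q \<in> Q" for q
      using dist_le[OF that] by (rule pos_divide_le_eq[THEN iffD2])
    then have "- Gap z H Q / B \<le> infdist z Q"
      unfolding infdist_notempty[OF Q(1)] using Q(1) by (intro cINF_greatest)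
    then have "- Gap z H Q \<le> infdist z Q * B"
      using pos_divide_le_eq[OF \<open>0 < B\<close>] by blast
    then show ?thesis by (simp add: algebra_simps)
  qed
  then show ?thesis unfolding B_def .
qed

locale IneIREG =
  fixes F H :: "'a::euclidean_space \<Rightarrow> 'a"
    and D X \<Omega> :: "'a set"
    and L_F L_H :: real
    and \<alpha> lam \<eta> :: "nat \<Rightarrow> real"
    and x w w' y :: "nat \<Rightarrow> 'a"
  assumes monoF: "monotone_op D F" and monoH: "monotone_op D H"
    and lipF: "L_F-lipschitz_on D F" and lipH: "L_H-lipschitz_on D H"
    and X_closed: "closed X" and X_bounded: "bounded X" and X_convex: "convex X"
    and X_ne: "X \<noteq> {}"
    and \<Omega>_closed: "closed \<Omega>" and \<Omega>_convex: "convex \<Omega>"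
    and X_sub: "X \<subseteq> \<Omega>" and \<Omega>_sub: "\<Omega> \<subseteq> D"
    and alpha_nn: "\<And>k. 0 \<le> \<alpha> k" and lam_pos: "\<And>k. 0 < lam k" and eta_pos: "\<And>k. 0 < \<eta> k"
    and x0: "x 0 \<in> X"
    \<comment> \<open>At k = 0 the truncated k - 1 is 0, which encodes the convention x_{-1} = x_0.\<close>
    and w_def: "\<And>k. w k = x k + \<alpha> k *\<^sub>R (x k - x (k - 1))"
    and w'_def: "\<And>k. w' k = proj \<Omega> (w k)"
    and y_def: "\<And>k. y k = proj X (w k - lam k *\<^sub>R (F (w' k) + \<eta> k *\<^sub>R H (w' k)))"
    and x_def: "\<And>k. x (Suc k) = proj X (w k - lam k *\<^sub>R (F (y k) + \<eta> k *\<^sub>R H (y k)))"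
    and step_size: "\<And>k. lam k * (L_F + \<eta> k * L_H) \<le> 1"
    and eta_dec: "decseq \<eta>"
    and alpha0_le: "\<alpha> 0 \<le> 1"
    and alpha_eta_dec: "decseq (\<lambda>k. \<alpha> k / \<eta> k)"
begin

definition \<delta> :: "nat \<Rightarrow> real" where
  "\<delta> k = \<alpha> k * (1 + \<alpha> k) * (norm (x k - x (k - 1)))\<^sup>2"

lemma \<delta>_nonneg: "0 \<le> \<delta> k"
  unfolding \<delta>_def using alpha_nn[of k] by simp

lemma x_in_X: "x k \<in> X"
  using x0 x_def X_closed X_ne by (cases k) (auto simp: closest_point_in_set)

lemma y_in_X: "y k \<in> X"
  using y_def X_closed X_ne by (simp add: closest_point_in_set)

lemma extragradient_VI_sol_step:
  assumes q: "q \<in> VI_sol F X"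
  shows "2 * lam j * \<eta> j * (H q \<bullet> (y j - q)) \<le> (norm (w j - q))\<^sup>2 - (norm (x (Suc j) - q))\<^sup>2"
proof -
  define G where "G z = F z + \<eta> j *\<^sub>R H z" for z
  have qX: "q \<in> X" using q unfolding VI_sol_def by blast
  have lipG: "(L_F + \<eta> j * L_H)-lipschitz_on \<Omega> G"
    unfolding G_def using lipF lipH \<Omega>_sub eta_pos[of j]
    by (intro lipschitz_on_add lipschitz_on_cmult_nonneg) (auto intro: lipschitz_on_subset)
  have "y j = closest_point X (w j - lam j *\<^sub>R G (closest_point \<Omega> (w j)))"
    using y_def w'_def unfolding G_def by simp
  then have "(norm (x (Suc j) - q))\<^sup>2 \<le> (norm (w j - q))\<^sup>2 + 2 * lam j * (G (y j) \<bullet> (q - y j))"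
    unfolding x_def G_def[symmetric]
    using extragradient_step_inequality[OF X_closed X_convex X_ne \<Omega>_closed \<Omega>_convex X_sub lipG]
      lam_pos[of j] step_size[of j] qX
    by (simp add: less_imp_le)
  moreover have "G (y j) \<bullet> (q - y j) \<le> - \<eta> j * (H q \<bullet> (y j - q))"
    unfolding G_def using VI_sol_monotone_inner_le[OF monoF monoH _ q y_in_X] X_sub \<Omega>_sub eta_pos[of j]
    by auto
  then have "2 * lam j * (G (y j) \<bullet> (q - y j)) \<le> 2 * lam j * (- \<eta> j * (H q \<bullet> (y j - q)))"
    using lam_pos[of j] by (intro mult_left_mono) auto
  ultimately show ?thesis by (simp add: algebra_simps)
qed

lemma weighted_inner_H_sum_le:
  assumes q: "q \<in> VI_sol F X"
  shows "2 * (\<Sum>j<k. lam j * (H q \<bullet> (y j - q))) \<le> (diameter X)\<^sup>2 / \<eta> k + (\<Sum>j<k. \<delta> j / \<eta> j)"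
proof -
  define a where "a j = (norm (x j - q))\<^sup>2" for j
  have qX: "q \<in> X" using q unfolding VI_sol_def by blast
  have a_bounds: "0 \<le> a j \<and> a j \<le> (diameter X)\<^sup>2" for j
    unfolding a_def using diameter_bounded_bound[OF X_bounded x_in_X qX]
    by (simp add: dist_norm power_mono)
  have wnorm: "(norm (w j - q))\<^sup>2 = (1 + \<alpha> j) * a j - \<alpha> j * a (j - 1) + \<delta> j" for j
  proof -
    have "w j - q = (1 + \<alpha> j) *\<^sub>R (x j - q) - \<alpha> j *\<^sub>R (x (j - 1) - q)"
      using w_def[of j] by (simp add: algebra_simps)
    then show ?thesis
      unfolding a_def \<delta>_def using power2_norm_extrapolation[of "\<alpha> j" "x j - q" "x (j - 1) - q"] by simp
  qed
  have step: "2 * lam j * (H q \<bullet> (y j - q))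
      \<le> (1 / \<eta> j + \<alpha> j / \<eta> j) * a j - \<alpha> j / \<eta> j * a (j - 1) - 1 / \<eta> j * a (Suc j) + \<delta> j / \<eta> j"
    for j
  proof -
    have "2 * lam j * (H q \<bullet> (y j - q)) * \<eta> j \<le> (1 + \<alpha> j) * a j - \<alpha> j * a (j - 1) + \<delta> j - a (Suc j)"
      using extragradient_VI_sol_step[OF q, of j] wnorm[of j] unfolding a_def by (simp add: mult_ac)
    then have "2 * lam j * (H q \<bullet> (y j - q)) \<le> ((1 + \<alpha> j) * a j - \<alpha> j * a (j - 1) + \<delta> j - a (Suc j)) / \<eta> j"
      using eta_pos[of j] by (simp add: pos_le_divide_eq)
    also have "\<dots> = (1 / \<eta> j + \<alpha> j / \<eta> j) * a j - \<alpha> j / \<eta> j * a (j - 1) - 1 / \<eta> j * a (Suc j) + \<delta> j / \<eta> j"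
      by (simp add: add_divide_distrib diff_divide_distrib algebra_simps)
    finally show ?thesis .
  qed
  have "(\<Sum>j<k. 2 * lam j * (H q \<bullet> (y j - q))) \<le> 1 / \<eta> k * (diameter X)\<^sup>2 + (\<Sum>j<k. \<delta> j / \<eta> j)"
  proof (rule weighted_telescoping_sum_le[where b = "\<lambda>j. 1 / \<eta> j" and c = "\<lambda>j. \<alpha> j / \<eta> j"])
    show "0 \<le> a j \<and> a j \<le> (diameter X)\<^sup>2" for j by (rule a_bounds)
    show "incseq (\<lambda>j. 1 / \<eta> j)"
      using eta_dec eta_pos by (simp add: incseq_def decseq_def frac_le)
    show "decseq (\<lambda>j. \<alpha> j / \<eta> j)" by (rule alpha_eta_dec)
    show "0 \<le> 1 / \<eta> j" "0 \<le> \<alpha> j / \<eta> j" for j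
      using alpha_nn[of j] eta_pos[of j] by simp_all
    show "\<alpha> 0 / \<eta> 0 \<le> 1 / \<eta> 0"
      using alpha0_le eta_pos[of 0] by (simp add: divide_right_mono)
  qed (rule step)
  then show ?thesis by (simp add: sum_distrib_left mult.assoc)
qed

lemma ergodic_inner_H_le:
  assumes q: "q \<in> VI_sol F X" and "1 \<le> k"
    and lam_lo: "0 < lam_lo" "\<And>j. lam_lo \<le> lam j"
  shows "H q \<bullet> ((1 / (\<Sum>j<k. lam j)) *\<^sub>R (\<Sum>j<k. lam j *\<^sub>R y j) - q)
           \<le> 1 / (real k * \<eta> k) * ((diameter X)\<^sup>2 / (2 * lam_lo))
             + (\<Sum>j<k. \<delta> j / \<eta> j) / real k * (1 / (2 * lam_lo))"
proof -
  define \<Lambda> where "\<Lambda> = (\<Sum>j<k. lam j)"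
  define C where "C = ((diameter X)\<^sup>2 / \<eta> k + (\<Sum>j<k. \<delta> j / \<eta> j)) / 2"
  have "real k * lam_lo \<le> \<Lambda>"
    unfolding \<Lambda>_def using sum_mono[of "{..<k}" "\<lambda>_. lam_lo" lam] lam_lo(2) by simp
  moreover have "0 < real k * lam_lo" using \<open>1 \<le> k\<close> lam_lo(1) by simp
  ultimately have "0 < \<Lambda>" by linarith
  have "0 \<le> (\<Sum>j<k. \<delta> j / \<eta> j)"
    by (intro sum_nonneg divide_nonneg_pos \<delta>_nonneg eta_pos)
  then have "0 \<le> C"
    unfolding C_def using eta_pos[of k] by simp
  have "H q \<bullet> ((1 / \<Lambda>) *\<^sub>R (\<Sum>j<k. lam j *\<^sub>R y j) - q) = (\<Sum>j<k. lam j * (H q \<bullet> (y j - q))) / \<Lambda>"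
    unfolding \<Lambda>_def using \<open>0 < \<Lambda>\<close> \<Lambda>_def by (intro inner_weighted_mean_diff) simp
  also have "\<dots> \<le> C / \<Lambda>"
    unfolding C_def using weighted_inner_H_sum_le[OF q, of k] \<open>0 < \<Lambda>\<close>
    by (intro divide_right_mono) simp_all
  also have "\<dots> \<le> C / (real k * lam_lo)"
    using \<open>0 \<le> C\<close> \<open>real k * lam_lo \<le> \<Lambda>\<close> \<open>0 < real k * lam_lo\<close> by (intro divide_left_mono) simp_all
  also have "\<dots> = 1 / (real k * \<eta> k) * ((diameter X)\<^sup>2 / (2 * lam_lo))
             + (\<Sum>j<k. \<delta> j / \<eta> j) / real k * (1 / (2 * lam_lo))"
    unfolding C_def using eta_pos[of k] lam_lo(1) \<open>1 \<le> k\<close> by (simp add: field_simps)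
  finally show ?thesis unfolding \<Lambda>_def .
qed

end

theorem proposition3p3:
  fixes F H :: "real ^ 'n \<Rightarrow> real ^ 'n"
    and D X \<Omega> :: "(real ^ 'n) set"
    and L_F L_H lam_lo lam_hi :: real
    and \<alpha> lam \<eta> :: "nat \<Rightarrow> real"
    and x w w' y :: "nat \<Rightarrow> real ^ 'n"
  assumes monoF: "monotone_op D F" and monoH: "monotone_op D H"
    and LF_pos: "L_F > 0" and LH_pos: "L_H > 0"
    and lipF: "L_F-lipschitz_on D F" and lipH: "L_H-lipschitz_on D H"
    and X_ne: "X \<noteq> {}" and X_compact: "compact X" and X_convex: "convex X"
    and Om_closed: "closed \<Omega>" and Om_convex: "convex \<Omega>"
    and X_sub: "X \<subseteq> \<Omega>" and Om_sub: "\<Omega> \<subseteq> D"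
    and Q_ne: "VI_sol F X \<noteq> {}"
    and alpha_nn: "\<And>k. \<alpha> k \<ge> 0" and lam_pos: "\<And>k. lam k > 0" and eta_pos: "\<And>k. \<eta> k > 0"
    and x0: "x 0 \<in> X"
    and w_def: "\<And>k. w k = x k + \<alpha> k *\<^sub>R (x k - x (k - 1))"
    and w'_def: "\<And>k. w' k = proj \<Omega> (w k)"
    and y_def: "\<And>k. y k = proj X (w k - lam k *\<^sub>R (F (w' k) + \<eta> k *\<^sub>R H (w' k)))"
    and x_def: "\<And>k. x (Suc k) = proj X (w k - lam k *\<^sub>R (F (y k) + \<eta> k *\<^sub>R H (y k)))"
    and eta_dec: "decseq \<eta>"
    and alpha0: "0 \<le> \<alpha> 0 \<and> \<alpha> 0 \<le> 1"
    and alpha_eta_dec: "decseq (\<lambda>k. \<alpha> k / \<eta> k)"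
    and lam_bounds: "\<And>k. lam_lo \<le> lam k \<and> lam k \<le> lam_hi"
    and lam_lo_pos: "0 < lam_lo" and lam_lo_hi: "lam_lo \<le> lam_hi"
    and lam_hi_le: "lam_hi \<le> 1 / (L_F + \<eta> 0 * L_H)"
    and delta_summable: "summable (\<lambda>k. \<alpha> k * (1 + \<alpha> k) * (norm (x k - x (k - 1)))\<^sup>2 / \<eta> k)"
  shows "\<forall>k\<ge>1.
    (let \<Lambda> = (\<Sum>j<k. lam j);
         ybar = (1 / \<Lambda>) *\<^sub>R (\<Sum>j<k. lam j *\<^sub>R y j);
         \<delta> = (\<lambda>j. \<alpha> j * (1 + \<alpha> j) * (norm (x j - x (j - 1)))\<^sup>2)
     in - bound_on H (VI_sol F X) * infdist ybar (VI_sol F X) \<le> Gap ybar H (VI_sol F X)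
        \<and> Gap ybar H (VI_sol F X)
            \<le> 1 / (real k * \<eta> k) * ((diameter X)\<^sup>2 / (2 * lam_lo))
              + (\<Sum>j<k. \<delta> j / \<eta> j) / real k * (1 / (2 * lam_lo)))"
proof -
  have "lam j * (L_F + \<eta> j * L_H) \<le> 1" for j
  proof -
    have "lam j * (L_F + \<eta> j * L_H) \<le> lam_hi * (L_F + \<eta> 0 * L_H)"
      using lam_bounds[of j] lam_pos[of j] LF_pos LH_pos eta_pos[of j] decseqD[OF eta_dec, of 0 j]
      by (intro mult_mono) auto
    also have "\<dots> \<le> 1"
      using lam_hi_le LF_pos LH_pos eta_pos[of 0] by (simp add: le_divide_eq add_pos_pos)
    finally show ?thesis .
  qed
  then interpret IneIREG F H D X \<Omega> L_F L_H \<alpha> lam \<eta> x w w' y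
    using assms compact_imp_closed[OF X_compact] compact_imp_bounded[OF X_compact]
    unfolding IneIREG_def by auto
  define Q where "Q = VI_sol F X"
  have "Q \<subseteq> X" unfolding Q_def VI_sol_def by auto
  have "continuous_on X H"
    using lipschitz_on_continuous_on[OF lipschitz_on_subset[OF lipH]] X_sub Om_sub by blast
  then have "bounded (H ` Q)"
    using \<open>Q \<subseteq> X\<close> compact_continuous_image[OF _ X_compact] compact_imp_bounded
    by (meson bounded_subset image_mono)
  then have "- bound_on H Q * infdist z Q \<le> Gap z H Q" for z
    using Q_ne \<open>Q \<subseteq> X\<close> X_bounded unfolding Q_def
    by (intro Gap_ge_neg_bound_on_infdist) (auto intro: bounded_subset)
  moreover have "Gap ((1 / (\<Sum>j<k. lam j)) *\<^sub>R (\<Sum>j<k. lam j *\<^sub>R y j)) H Q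
      \<le> 1 / (real k * \<eta> k) * ((diameter X)\<^sup>2 / (2 * lam_lo))
        + (\<Sum>j<k. \<delta> j / \<eta> j) / real k * (1 / (2 * lam_lo))" if "1 \<le> k" for k
    unfolding Q_def using Q_ne that lam_lo_pos lam_bounds
    by (intro Gap_leI ergodic_inner_H_le) auto
  ultimately show ?thesis unfolding Let_def Q_def \<delta>_def by simp
qed

end
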